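(* Let $G$ be a graph on $[n]$ that is upper crossing closed with respect to a total order $\unlhd$ on $E(G)$. Then for every $H\in NC_G$, $$\mu(H)=(-1)^{n-cc(H)}\,\mathrm{ncnbc}_{n-cc(H)}(H).$$ Moreover, if $NC_G$ is graded, then $$\chi(NC_G,t)=\sum_{k\ge 0}(-1)^k\,\mathrm{ncnbc}_k(G)\,t^{\rho(NC_G)-k}.$$
   Context: All graphs are finite simple graphs with vertex set $[n]=\{1,\dots,n\}$; edges are written $ij$ with $i<j$. Two edges $a_1a_2$ and $b_1b_2$ cross if $a_1<b_1<a_2<b_2$ or $b_1<a_1<b_2<a_2$. A spanning subgraph is identified with its edge set. A bond of $G$ is a spanning subgraph each of whose connected components is an induced subgraph of $G$; for a bond $H$, $\pi(H)$ is the partition of $[n]$ into the vertex sets of its components, and $cc(H)$ is its number of connected components. A set partition is crossing if there are distinct blocks $B,B'$ and $a,c\in B$, $b,d\in B'$ with $a<b<c<d$, noncrossing otherwise; $H$ is noncrossing if $\pi(H)$ is. $NC_G$ is the poset of noncrossing bonds ordered by inclusion of edge sets; its minimum is the empty bond $\hat0$. Two crossing edges $e,f$ are crossing closed if among all induced connected subgraphs of $G$ containing $e$ and $f$ there is a unique minimal one (under containment), denoted $J(e,f)$; $G$ is crossing closed if all pairs of crossing edges are. $G$ is upper crossing closed with respect to a total order $\unlhd$ on $E(G)$ if $G$ is crossing closed and for every pair of crossing edges $e,f$, $J(e,f)$ contains an edge $h$ with $h\lhd e$ and $h\lhd f$. Given a total order on the edges of a graph $X$, a broken circuit is the edge set of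 a cycle of $X$ with its smallest edge removed; an NBC set is a set of edges containing no broken circuit; a noncrossing NBC set is an NBC set no two of whose edges cross. $\mathrm{ncnbc}_k(X)$ is the number of noncrossing NBC sets of $X$ of size $k$ (for $H\in NC_G$, using the restriction of $\unlhd$ to $E(H)$). The Möbius function is $\mu(\hat0)=1$ and $\mu(x)=-\sum_{y<x}\mu(y)$ for $x\neq\hat0$. For graded $P$ with rank function $\rho$ and $\hat0$, $\chi(P,t)=\sum_{x\in P}\mu(x)t^{\rho(P)-\rho(x)}$, where $\rho(P)$ is the rank of $P$. *)

theory Defs
  imports Complex_Main
begin

(* Vertices are natural numbers in [n] = {1..n}; an edge ij (i<j) is the pair (i,j). *)
type_synonym edge = "nat \<times> nat"

definition graph_on :: "nat \<Rightarrow> edge set \<Rightarrow> bool" where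
  "graph_on n E \<longleftrightarrow> (\<forall>(i,j)\<in>E. 1 \<le> i \<and> i < j \<and> j \<le> n)"

definition mk_edge :: "nat \<Rightarrow> nat \<Rightarrow> edge" where
  "mk_edge u v = (min u v, max u v)"

definition crosses :: "edge \<Rightarrow> edge \<Rightarrow> bool" where
  "crosses e f \<longleftrightarrow>
     (fst e < fst f \<and> fst f < snd e \<and> snd e < snd f) \<or>
     (fst f < fst e \<and> fst e < snd f \<and> snd f < snd e)"

definition adjrel :: "edge set \<Rightarrow> (nat \<times> nat) set" where
  "adjrel H = {(u,v). (u,v) \<in> H \<or> (v,u) \<in> H}"

definition induced_edges :: "edge set \<Rightarrow> nat set \<Rightarrow> edge set" where
  "induced_edges E S = {(i,j) \<in> E. i \<in> S \<and> j \<in> S}"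

definition connected_on :: "edge set \<Rightarrow> nat set \<Rightarrow> bool" where
  "connected_on E S \<longleftrightarrow> (\<forall>u\<in>S. \<forall>v\<in>S. (u,v) \<in> (adjrel (induced_edges E S))\<^sup>*)"

definition blocks :: "nat \<Rightarrow> edge set \<Rightarrow> nat set set" where
  "blocks n H = {1..n} // ((adjrel H)\<^sup>*)"

definition cc :: "nat \<Rightarrow> edge set \<Rightarrow> nat" where
  "cc n H = card (blocks n H)"

definition is_bond :: "nat \<Rightarrow> edge set \<Rightarrow> edge set \<Rightarrow> bool" where
  "is_bond n E H \<longleftrightarrow> H \<subseteq> E \<and>
     (\<forall>C\<in>blocks n H. induced_edges H C = induced_edges E C)"

definition crossing_partition :: "nat set set \<Rightarrow> bool" where
  "crossing_partition P \<longleftrightarrow>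
     (\<exists>B\<in>P. \<exists>B'\<in>P. B \<noteq> B' \<and>
        (\<exists>a\<in>B. \<exists>c\<in>B. \<exists>b\<in>B'. \<exists>d\<in>B'. a < b \<and> b < c \<and> c < d))"

definition noncrossing_bond :: "nat \<Rightarrow> edge set \<Rightarrow> edge set \<Rightarrow> bool" where
  "noncrossing_bond n E H \<longleftrightarrow> is_bond n E H \<and> \<not> crossing_partition (blocks n H)"

(* NC_G, as a set of edge sets, ordered by inclusion *)
definition NC :: "nat \<Rightarrow> edge set \<Rightarrow> edge set set" where
  "NC n E = {H. noncrossing_bond n E H}"

definition J_candidates :: "nat \<Rightarrow> edge set \<Rightarrow> edge \<Rightarrow> edge \<Rightarrow> nat set set" where
  "J_candidates n E e f =
     {S. S \<subseteq> {1..n} \<and> connected_on E S \<and> e \<in> induced_edges E S \<and> f \<in> induced_edges E S}"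

definition is_minimal_J :: "nat \<Rightarrow> edge set \<Rightarrow> edge \<Rightarrow> edge \<Rightarrow> nat set \<Rightarrow> bool" where
  "is_minimal_J n E e f S \<longleftrightarrow> S \<in> J_candidates n E e f \<and>
     (\<forall>S'\<in>J_candidates n E e f. S' \<subseteq> S \<longrightarrow> S' = S)"

definition crossing_closed_pair :: "nat \<Rightarrow> edge set \<Rightarrow> edge \<Rightarrow> edge \<Rightarrow> bool" where
  "crossing_closed_pair n E e f \<longleftrightarrow> (\<exists>!S. is_minimal_J n E e f S)"

definition J_edges :: "nat \<Rightarrow> edge set \<Rightarrow> edge \<Rightarrow> edge \<Rightarrow> edge set" where
  "J_edges n E e f = induced_edges E (THE S. is_minimal_J n E e f S)"

definition crossing_closed :: "nat \<Rightarrow> edge set \<Rightarrow> bool" where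
  "crossing_closed n E \<longleftrightarrow>
     (\<forall>e\<in>E. \<forall>f\<in>E. crosses e f \<longrightarrow> crossing_closed_pair n E e f)"

(* total order r on E (reflexive relation, as in linear_order_on); h \<lhd> e means (h,e) \<in> r, h \<noteq> e *)
definition upper_crossing_closed :: "nat \<Rightarrow> edge set \<Rightarrow> (edge \<times> edge) set \<Rightarrow> bool" where
  "upper_crossing_closed n E r \<longleftrightarrow> crossing_closed n E \<and>
     (\<forall>e\<in>E. \<forall>f\<in>E. crosses e f \<longrightarrow>
        (\<exists>h\<in>J_edges n E e f. (h,e) \<in> r \<and> h \<noteq> e \<and> (h,f) \<in> r \<and> h \<noteq> f))"

definition cycle_sets :: "edge set \<Rightarrow> edge set set" where
  "cycle_sets X = {C. \<exists>vs. length vs \<ge> 3 \<and> distinct vs \<and>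
       C = {mk_edge (vs ! i) (vs ! ((i + 1) mod length vs)) | i. i < length vs} \<and> C \<subseteq> X}"

definition min_edge :: "(edge \<times> edge) set \<Rightarrow> edge set \<Rightarrow> edge" where
  "min_edge r C = (THE e. e \<in> C \<and> (\<forall>c\<in>C. (e,c) \<in> r))"

definition broken_circuits :: "(edge \<times> edge) set \<Rightarrow> edge set \<Rightarrow> edge set set" where
  "broken_circuits r X = {C - {min_edge r C} | C. C \<in> cycle_sets X}"

definition is_nbc :: "(edge \<times> edge) set \<Rightarrow> edge set \<Rightarrow> edge set \<Rightarrow> bool" where
  "is_nbc r X S \<longleftrightarrow> S \<subseteq> X \<and> (\<forall>B\<in>broken_circuits r X. \<not> B \<subseteq> S)"

definition is_ncnbc :: "(edge \<times> edge) set \<Rightarrow> edge set \<Rightarrow> edge set \<Rightarrow> bool" where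
  "is_ncnbc r X S \<longleftrightarrow> is_nbc r X S \<and> (\<forall>e\<in>S. \<forall>f\<in>S. \<not> crosses e f)"

definition ncnbc :: "(edge \<times> edge) set \<Rightarrow> edge set \<Rightarrow> nat \<Rightarrow> nat" where
  "ncnbc r X k = card {S. is_ncnbc r X S \<and> card S = k}"

(* Moebius function of a poset P of finite sets ordered by inclusion, with minimum {} *)
function mobius :: "'a set set \<Rightarrow> 'a set \<Rightarrow> int" where
  "mobius P x = (if x = {} then 1 else if infinite x then 0
                 else - (\<Sum>y\<in>{y\<in>P. y \<subset> x}. mobius P y))"
  by pat_completeness auto
termination
  by (relation "measure (\<lambda>(P,x). card x)") (auto intro: psubset_card_mono)

definition covers :: "'a set set \<Rightarrow> 'a set \<Rightarrow> 'a set \<Rightarrow> bool" where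
  "covers P x y \<longleftrightarrow> x \<in> P \<and> y \<in> P \<and> x \<subset> y \<and> \<not> (\<exists>z\<in>P. x \<subset> z \<and> z \<subset> y)"

(* P (with minimum {}) is graded with rank function rho and rank rk:
   rho {} = 0, rho increases by one along covers, and all maximal elements have rank rk
   (equivalently: all maximal chains have length rk). *)
definition graded_rank :: "'a set set \<Rightarrow> ('a set \<Rightarrow> nat) \<Rightarrow> nat \<Rightarrow> bool" where
  "graded_rank P rho rk \<longleftrightarrow> {} \<in> P \<and> rho {} = 0 \<and>
     (\<forall>x y. covers P x y \<longrightarrow> rho y = rho x + 1) \<and>
     (\<forall>x\<in>P. (\<not> (\<exists>y\<in>P. x \<subset> y)) \<longrightarrow> rho x = rk)"

definition char_poly :: "'a set set \<Rightarrow> ('a set \<Rightarrow> nat) \<Rightarrow> nat \<Rightarrow> real \<Rightarrow> real" where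
  "char_poly P rho rk t = (\<Sum>x\<in>P. of_int (mobius P x) * t ^ (rk - rho x))"

end

theory Submission
  imports Defs "HOL-Library.Transitive_Closure_Table"
begin

text \<open>
  Write \<open>rk K = n - cc K\<close> and \<open>f K = (-1)^(rk K) ncnbc_(rk K)(K)\<close>. A noncrossing NBC set \<open>S\<close> of
  \<open>H \<in> NC_G\<close> is a forest without crossing edges, so the bond it spans is a noncrossing bond
  \<open>K \<le> H\<close> of rank \<open>|S|\<close>, and \<open>S\<close> is a noncrossing NBC set of \<open>K\<close> of full rank. Hence
  \<open>\<Sum>K \<le> H. f K\<close> is the signed count of all noncrossing NBC sets of \<open>H\<close>. For \<open>H \<noteq> {}\<close> the least
  edge \<open>m\<close> of \<open>H\<close> lies in no broken circuit and, by upper crossing closedness, crosses no edge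
  of \<open>H\<close>; so toggling \<open>m\<close> is a sign-reversing involution and the count vanishes. Thus \<open>f\<close>
  satisfies the recursion that defines \<open>\<mu>\<close>.

  If \<open>NC_G\<close> is graded, its rank function is forced to be \<open>rk\<close>: every nonempty \<open>H\<close> covers
  the bond obtained by deleting the edges at a non-cut vertex of one of its blocks. Substituting
  \<open>\<mu>\<close> into \<open>\<chi>\<close> and grouping the noncrossing NBC sets of \<open>G\<close> by size gives the second formula.
\<close>

section \<open>Connected components\<close>

abbreviation linked :: "edge set \<Rightarrow> (nat \<times> nat) set" where
  "linked H \<equiv> (adjrel H)\<^sup>*"

lemma adjrel_iff: "(x, y) \<in> adjrel H \<longleftrightarrow> (x, y) \<in> H \<or> (y, x) \<in> H"
  by (simp add: adjrel_def)

lemma sym_adjrel: "sym (adjrel H)"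
  by (auto simp: sym_def adjrel_def)

lemma linked_sym: "(x, y) \<in> linked H \<Longrightarrow> (y, x) \<in> linked H"
  by (meson sym_adjrel sym_def sym_rtrancl)

lemma linked_trans: "(x, y) \<in> linked H \<Longrightarrow> (y, z) \<in> linked H \<Longrightarrow> (x, z) \<in> linked H"
  by (rule rtrancl_trans)

lemma equiv_linked: "equiv UNIV (linked H)"
  by (simp add: equivI refl_rtrancl sym_rtrancl sym_adjrel trans_rtrancl)

lemma linked_mono: "H \<subseteq> K \<Longrightarrow> linked H \<subseteq> linked K"
  by (rule rtrancl_mono) (auto simp: adjrel_def)

lemma edge_linked:
  assumes "(a, b) \<in> H"
  shows "(a, b) \<in> linked H" "(b, a) \<in> linked H"
  using assms by (auto simp: adjrel_def)

lemma linked_Image_eq_iff: "linked H `` {v} = linked H `` {w} \<longleftrightarrow> (v, w) \<in> linked H"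
  using equiv_class_eq_iff[OF equiv_linked, of v w H] by simp

lemma blocks_eq_image: "blocks n H = (\<lambda>v. linked H `` {v}) ` {1..n}"
  by (auto simp: blocks_def quotient_def)

lemma finite_blocks: "finite (blocks n H)"
  by (simp add: blocks_eq_image)

lemma block_of_vertex: "v \<in> {1..n} \<Longrightarrow> linked H `` {v} \<in> blocks n H"
  by (simp add: blocks_eq_image)

lemma linked_if_in_same_block:
  assumes "C \<in> blocks n H" "x \<in> C" "y \<in> C"
  shows "(x, y) \<in> linked H"
  using assms by (auto simp: blocks_eq_image intro: linked_sym linked_trans)

lemma block_eq_Image:
  assumes "C \<in> blocks n H" "x \<in> C"
  shows "C = linked H `` {x}"
proof -
  obtain u where "C = linked H `` {u}"
    using assms(1) by (auto simp: blocks_eq_image)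
  with assms(2) show ?thesis
    by (simp add: linked_Image_eq_iff)
qed

lemma not_linked_if_in_different_blocks:
  assumes "C \<in> blocks n H" "C' \<in> blocks n H" "C \<noteq> C'" "x \<in> C" "y \<in> C'"
  shows "(x, y) \<notin> linked H"
proof
  assume "(x, y) \<in> linked H"
  moreover obtain u u' where "C = linked H `` {u}" "C' = linked H `` {u'}"
    using assms(1,2) by (auto simp: blocks_eq_image)
  ultimately show False
    using assms(3-5) by (auto simp: linked_Image_eq_iff intro: linked_sym linked_trans)
qed

lemma cc_empty: "cc n {} = n"
proof -
  have "linked {} = Id" by (simp add: adjrel_def)
  then have "blocks n {} = (\<lambda>v. {v}) ` {1..n}" by (simp add: blocks_eq_image)
  then show ?thesis by (simp add: cc_def card_image)
qed

lemma cc_le: "cc n H \<le> n"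
  using card_image_le[of "{1..n}" "\<lambda>v. linked H `` {v}"] by (simp add: cc_def blocks_eq_image)

lemma linked_in_range:
  assumes "graph_on n H" "(v, w) \<in> linked H" "v \<noteq> w"
  shows "v \<in> {1..n}" "w \<in> {1..n}"
proof -
  have "v = w \<or> v \<in> {1..n} \<and> w \<in> {1..n}"
    using assms(2)
  proof (induction rule: rtrancl_induct)
    case (step y z)
    then have "y \<in> {1..n} \<and> z \<in> {1..n}"
      using assms(1) by (auto simp: adjrel_def graph_on_def)
    with step.IH show ?case by auto
  qed simp
  with assms(3) show "v \<in> {1..n}" "w \<in> {1..n}" by auto
qed

lemma block_subset:
  assumes "graph_on n H" "C \<in> blocks n H"
  shows "C \<subseteq> {1..n}"
  using assms linked_in_range[OF assms(1)] by (fastforce simp: blocks_eq_image)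

lemma graph_on_subset: "graph_on n E \<Longrightarrow> H \<subseteq> E \<Longrightarrow> graph_on n H"
  by (auto simp: graph_on_def)

lemma finite_if_graph_on: "graph_on n H \<Longrightarrow> finite H"
  by (rule finite_subset[of _ "{1..n} \<times> {1..n}"]) (auto simp: graph_on_def)

lemma blocks_coarsening:
  assumes "linked X \<subseteq> linked Y"
  shows "blocks n Y = (\<lambda>C. linked Y `` C) ` blocks n X"
proof -
  have "linked Y `` (linked X `` {v}) = linked Y `` {v}" for v
    using assms by (auto intro: linked_trans)
  then show ?thesis by (simp add: blocks_eq_image image_image)
qed

lemma cc_antimono: "linked X \<subseteq> linked Y \<Longrightarrow> cc n Y \<le> cc n X"
  unfolding cc_def blocks_coarsening[of X Y] by (rule card_image_le[OF finite_blocks])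

lemma linked_if_cc_eq:
  assumes "linked X \<subseteq> linked Y" "cc n Y = cc n X"
    and "u \<in> {1..n}" "w \<in> {1..n}" "(u, w) \<in> linked Y"
  shows "(u, w) \<in> linked X"
proof -
  have "inj_on (\<lambda>C. linked Y `` C) (blocks n X)"
    using assms(2) unfolding cc_def blocks_coarsening[OF assms(1)]
    by (intro eq_card_imp_inj_on[OF finite_blocks]) simp
  moreover have "linked Y `` (linked X `` {x}) = linked Y `` {x}" for x
    using assms(1) by (auto intro: linked_trans)
  ultimately have "linked X `` {u} = linked X `` {w}"
    using assms(3-5) block_of_vertex linked_Image_eq_iff by (metis inj_onD)
  then show ?thesis by (simp add: linked_Image_eq_iff)
qed

lemma linked_insert_Image:
  assumes "(u, v) \<notin> linked S"
  defines "X \<equiv> linked S `` {u} \<union> linked S `` {v}"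
  shows "linked (insert (u, v) S) `` {w} = (if w \<in> X then X else linked S `` {w})"
proof -
  have "adjrel (insert (u, v) S) = insert (u, v) (insert (v, u) (adjrel S))"
    by (auto simp: adjrel_def)
  then have "linked (insert (u, v) S) = linked S
      \<union> {(x, y). (x, u) \<in> linked S \<and> (v, y) \<in> linked S}
      \<union> {(x, y). (x, v) \<in> linked S \<and> (u, y) \<in> linked S}"
    by (simp add: rtrancl_insert Un_assoc Un_absorb2 subset_iff)
      (auto intro: linked_trans)
  then have new: "linked (insert (u, v) S) `` {w} = linked S `` {w}
      \<union> (if (w, u) \<in> linked S then linked S `` {v} else {})
      \<union> (if (w, v) \<in> linked S then linked S `` {u} else {})"
    by auto
  show ?thesis
  proof (cases "w \<in> X")
    case True
    then have "(w, u) \<in> linked S \<and> (w, v) \<notin> linked S \<and> linked S `` {w} = linked S `` {u}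
        \<or> (w, v) \<in> linked S \<and> (w, u) \<notin> linked S \<and> linked S `` {w} = linked S `` {v}"
      using assms(1) unfolding X_def
      by (auto simp: linked_Image_eq_iff intro: linked_sym linked_trans)
    then show ?thesis
      using True by (auto simp: new X_def)
  next
    case False
    then have "(w, u) \<notin> linked S" "(w, v) \<notin> linked S"
      by (auto simp: X_def intro: linked_sym)
    then show ?thesis
      using False by (simp add: new)
  qed
qed

lemma cc_insert_edge:
  assumes "u \<in> {1..n}" "v \<in> {1..n}" "(u, v) \<notin> linked S"
  shows "cc n (insert (u, v) S) + 1 = cc n S"
proof -
  let ?C = "\<lambda>w. linked S `` {w}"
  let ?X = "?C u \<union> ?C v"
  have "blocks n (insert (u, v) S) = (\<lambda>w. if w \<in> ?X then ?X else ?C w) ` {1..n}"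
    unfolding blocks_eq_image linked_insert_Image[OF assms(3)] ..
  also have "\<dots> = insert ?X (?C ` ({1..n} - ?X))"
    using assms(1) by (auto simp: image_iff)
  also have "?C ` ({1..n} - ?X) = blocks n S - {?C u, ?C v}"
  proof -
    have "?C w \<notin> {?C u, ?C v} \<longleftrightarrow> w \<notin> ?X" for w
      by (auto simp: linked_Image_eq_iff intro: linked_sym)
    then have "{1..n} - ?X = {w \<in> {1..n}. ?C w \<notin> {?C u, ?C v}}"
      by blast
    then show ?thesis
      unfolding blocks_eq_image by blast
  qed
  finally have new: "blocks n (insert (u, v) S) = insert ?X (blocks n S - {?C u, ?C v})" .
  have "?X \<notin> blocks n S"
  proof
    assume "?X \<in> blocks n S"
    then have "(u, v) \<in> linked S"
      by (rule linked_if_in_same_block) auto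
    with assms(3) show False ..
  qed
  moreover have "?C u \<noteq> ?C v" and sub: "{?C u, ?C v} \<subseteq> blocks n S"
    using assms by (auto simp: linked_Image_eq_iff block_of_vertex)
  then have "card (blocks n S - {?C u, ?C v}) + 2 = card (blocks n S)"
    using card_mono[OF finite_blocks sub] by (simp add: card_Diff_subset)
  ultimately show ?thesis
    unfolding cc_def new using finite_blocks by simp
qed

lemma linked_induced_block:
  assumes "(u, w) \<in> linked H"
  shows "(u, w) \<in> linked (induced_edges H (linked H `` {u}))"
  using assms
proof (induction rule: rtrancl_induct)
  case (step y z)
  then have "(y, z) \<in> adjrel (induced_edges H (linked H `` {u}))"
    using rtrancl.rtrancl_into_rtrancl[OF step.hyps]
    by (auto simp: adjrel_iff induced_edges_def)
  with step.IH show ?case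
    by (rule rtrancl.rtrancl_into_rtrancl)
qed simp

lemma connected_on_block:
  assumes "C \<in> blocks n H"
  shows "connected_on H C"
  unfolding connected_on_def
proof (intro ballI)
  fix u w assume "u \<in> C" "w \<in> C"
  then have "C = linked H `` {u}" "(u, w) \<in> linked H"
    using block_eq_Image[OF assms] linked_if_in_same_block[OF assms] by blast+
  then show "(u, w) \<in> linked (induced_edges H C)"
    using linked_induced_block by simp
qed

lemma linked_if_connected_on:
  assumes "connected_on X C" "u \<in> C" "w \<in> C"
  shows "(u, w) \<in> linked X"
proof -
  have "(u, w) \<in> linked (induced_edges X C)"
    using assms by (simp add: connected_on_def)
  moreover have "induced_edges X C \<subseteq> X"
    by (auto simp: induced_edges_def)
  ultimately show ?thesis
    using linked_mono by blast
qed

section \<open>Cycles and forests\<close>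

lemma mk_edge_in_adjrel: "mk_edge a b \<in> T \<Longrightarrow> (a, b) \<in> adjrel T"
  by (cases "a \<le> b") (auto simp: mk_edge_def adjrel_def min_def max_def)

lemma cycle_sets_mono: "X \<subseteq> Y \<Longrightarrow> cycle_sets X \<subseteq> cycle_sets Y"
  by (auto simp: cycle_sets_def)

lemma cycle_sets_empty: "cycle_sets {} = {}"
  by (fastforce simp: cycle_sets_def)

lemma add_mod_neq:
  fixes i d L :: nat
  assumes "i < L" "0 < d" "d < L"
  shows "(i + d) mod L \<noteq> i"
proof
  assume "(i + d) mod L = i"
  then have "(i + d) mod L = i mod L"
    using assms(1) by simp
  then have "L dvd d"
    by (subst (asm) mod_eq_dvd_iff_nat) auto
  with assms(2,3) show False
    by (simp add: nat_dvd_not_less)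
qed

lemma cycle_edges_inj:
  assumes "distinct vs" "length vs = L" "3 \<le> L" "i < L" "j < L"
    and "mk_edge (vs ! i) (vs ! ((i + 1) mod L)) = mk_edge (vs ! j) (vs ! ((j + 1) mod L))"
  shows "i = j"
proof -
  have "(i + 1) mod L < L" "(j + 1) mod L < L"
    using assms by auto
  moreover have "vs ! i = vs ! j \<or> vs ! i = vs ! ((j + 1) mod L) \<and> vs ! ((i + 1) mod L) = vs ! j"
    using assms(6) by (auto simp: mk_edge_def min_def max_def split: if_splits)
  ultimately have "i = j \<or> i = (j + 1) mod L \<and> (i + 1) mod L = j"
    using assms(1,2,4,5) nth_eq_iff_index_eq by metis
  then show ?thesis
  proof
    assume "i = (j + 1) mod L \<and> (i + 1) mod L = j"
    note ij = this[THEN conjunct1, symmetric] and ji = this[THEN conjunct2]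
    have "(i + 2) mod L = ((i + 1) mod L + 1) mod L"
      using mod_add_left_eq[of "i + 1" L 1] by simp
    also have "\<dots> = i"
      using ij by (simp only: ji)
    finally show ?thesis
      using add_mod_neq[OF assms(4), of 2] assms(3) by simp
  qed
qed

lemma rtrancl_chain:
  assumes "\<And>k. k < m \<Longrightarrow> (g k, g (Suc k)) \<in> R"
  shows "(g 0, g m) \<in> R\<^sup>*"
  using assms by (induction m) (auto intro: rtrancl.rtrancl_into_rtrancl)

text \<open>Walk once around the cycle, from the far end of \<open>e\<close> back to its near end.\<close>

lemma cycle_edge_linked_in_rest:
  assumes "C \<in> cycle_sets X" "e \<in> C"
  shows "(fst e, snd e) \<in> linked (C - {e})"
proof -
  obtain vs where vs: "length vs \<ge> 3" "distinct vs"
    "C = {mk_edge (vs ! i) (vs ! ((i + 1) mod length vs)) | i. i < length vs}"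
    using assms(1) by (auto simp: cycle_sets_def)
  let ?L = "length vs"
  let ?e = "\<lambda>i. mk_edge (vs ! i) (vs ! ((i + 1) mod ?L))"
  obtain i0 where i0: "i0 < ?L" "e = ?e i0"
    using assms(2) vs(3) by auto
  define g where "g k = vs ! ((i0 + 1 + k) mod ?L)" for k
  have "(g k, g (Suc k)) \<in> adjrel (C - {e})" if "k < ?L - 1" for k
  proof -
    let ?j = "(i0 + 1 + k) mod ?L"
    have "?j \<noteq> i0"
      using add_mod_neq[OF i0(1), of "k + 1"] that by (simp add: add.assoc)
    moreover have j: "?j < ?L"
      using vs(1) by (intro mod_less_divisor) linarith
    ultimately have "?e ?j \<in> C - {e}"
      using cycle_edges_inj[OF vs(2) refl vs(1) _ i0(1)] i0(2) vs(3) by blast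
    moreover have "(?j + 1) mod ?L = (i0 + 1 + Suc k) mod ?L"
      by (simp add: mod_Suc_eq)
    ultimately show ?thesis
      by (intro mk_edge_in_adjrel) (simp add: g_def)
  qed
  then have "(g 0, g (?L - 1)) \<in> linked (C - {e})"
    by (rule rtrancl_chain)
  moreover have "i0 + 1 + (?L - 1) = i0 + ?L"
    using vs(1) by simp
  then have "g (?L - 1) = vs ! i0"
    using i0(1) by (simp add: g_def)
  ultimately have "(vs ! ((i0 + 1) mod ?L), vs ! i0) \<in> linked (C - {e})"
    by (simp add: g_def)
  then show ?thesis
    using i0(2) by (auto simp: mk_edge_def min_def max_def intro: linked_sym)
qed

lemma mk_edge_if_adjrel: "graph_on n S \<Longrightarrow> (a, b) \<in> adjrel S \<Longrightarrow> mk_edge a b \<in> S"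
  by (auto simp: adjrel_def graph_on_def mk_edge_def min_def max_def)

lemma cycle_closing_path:
  assumes S: "graph_on n S" and "u < v"
    and path: "rtrancl_path (\<lambda>x y. (x, y) \<in> adjrel S) u xs v"
    and "distinct (u # xs)" "2 \<le> length xs"
  shows "cycle_sets (insert (u, v) S) \<noteq> {}"
proof -
  have "xs \<noteq> []"
    using \<open>2 \<le> length xs\<close> by auto
  then have last: "last xs = v"
    using rtrancl_path_last[OF path] by blast
  define vs where "vs = u # xs"
  let ?L = "length vs"
  define C where "C = {mk_edge (vs ! i) (vs ! ((i + 1) mod ?L)) | i. i < ?L}"
  have "mk_edge (vs ! i) (vs ! ((i + 1) mod ?L)) \<in> insert (u, v) S" if "i < ?L" for i
  proof (cases "i < length xs")
    case True
    then have "(vs ! i, vs ! ((i + 1) mod ?L)) \<in> adjrel S"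
      using rtrancl_path_nth[OF path True] by (simp add: vs_def)
    then show ?thesis
      using mk_edge_if_adjrel[OF S] by blast
  next
    case False
    with that have i: "i = length xs"
      by (simp add: vs_def)
    then have "vs ! i = v"
      using last \<open>xs \<noteq> []\<close> by (simp add: vs_def last_conv_nth nth_Cons')
    moreover have "vs ! ((i + 1) mod ?L) = u"
      using i by (simp add: vs_def)
    ultimately have "mk_edge (vs ! i) (vs ! ((i + 1) mod ?L)) = (u, v)"
      using \<open>u < v\<close> by (simp add: mk_edge_def)
    then show ?thesis by simp
  qed
  then have "C \<subseteq> insert (u, v) S"
    unfolding C_def by blast
  moreover have "3 \<le> ?L" "distinct vs"
    using \<open>2 \<le> length xs\<close> \<open>distinct (u # xs)\<close> by (simp_all add: vs_def)
  ultimately have "C \<in> cycle_sets (insert (u, v) S)"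
    unfolding cycle_sets_def C_def by blast
  then show ?thesis by blast
qed

lemma cycle_through_new_edge:
  assumes S: "graph_on n S" and "u < v" "(u, v) \<notin> S" "(u, v) \<in> linked S"
  shows "cycle_sets (insert (u, v) S) \<noteq> {}"
proof -
  let ?P = "\<lambda>x y. (x, y) \<in> adjrel S"
  have "?P\<^sup>*\<^sup>* u v"
    using assms(4) by (simp add: rtranclp_rtrancl_eq)
  then obtain ys where "rtrancl_path ?P u ys v"
    by (auto simp: rtranclp_eq_rtrancl_path)
  then obtain xs where path: "rtrancl_path ?P u xs v" and "distinct (u # xs)"
    by (rule rtrancl_path_distinct)
  have "xs \<noteq> []"
  proof
    assume "xs = []"
    then have "u = v"
      using path by (auto elim: rtrancl_path.cases)
    with \<open>u < v\<close> show False by simp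
  qed
  have "2 \<le> length xs"
  proof (rule ccontr)
    assume "\<not> 2 \<le> length xs"
    with \<open>xs \<noteq> []\<close> have "length xs = 1"
      by (simp add: not_le less_2_cases_iff)
    then have "xs = [v]"
      using rtrancl_path_last[OF path \<open>xs \<noteq> []\<close>] by (auto simp: length_Suc_conv)
    then have "(u, v) \<in> S \<or> (v, u) \<in> S"
      using rtrancl_path_nth[OF path, of 0] by (simp add: adjrel_iff)
    then show False
      using assms(2,3) S by (auto simp: graph_on_def)
  qed
  with S \<open>u < v\<close> path \<open>distinct (u # xs)\<close> show ?thesis
    by (rule cycle_closing_path)
qed

lemma card_plus_cc_if_acyclic:
  assumes "graph_on n S" "cycle_sets S = {}"
  shows "card S + cc n S = n"
  using finite_if_graph_on[OF assms(1)] assms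
proof (induction S rule: finite_induct)
  case empty
  then show ?case by (simp add: cc_empty)
next
  case (insert e F)
  obtain u v where e: "e = (u, v)" by fastforce
  have F: "graph_on n F" "cycle_sets F = {}"
    using insert.prems cycle_sets_mono[of F "insert e F"] by (auto simp: graph_on_def)
  have uv: "u \<in> {1..n}" "v \<in> {1..n}" "u < v"
    using insert.prems(1) e by (auto simp: graph_on_def)
  have "(u, v) \<notin> linked F"
    using cycle_through_new_edge[OF F(1) uv(3)] insert.hyps(2) insert.prems(2) e by auto
  then have "cc n (insert e F) + 1 = cc n F"
    using cc_insert_edge uv e by blast
  with insert.IH[OF F] insert.hyps show ?case by simp
qed

section \<open>Crossing edges and crossing partitions\<close>

lemma crosses_sym: "crosses e f \<longleftrightarrow> crosses f e"
  by (auto simp: crosses_def)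

lemma not_crosses_self: "\<not> crosses e e"
  by (auto simp: crosses_def)

definition strictly_between :: "nat \<Rightarrow> nat \<Rightarrow> nat \<Rightarrow> bool" where
  "strictly_between x y z \<longleftrightarrow> min x y < z \<and> z < max x y"

lemma edge_leaving_interval:
  assumes "(a, c) \<in> linked S" "strictly_between x y a \<noteq> strictly_between x y c"
  shows "\<exists>u w. (u, w) \<in> S \<and> (a, u) \<in> linked S \<and> (a, w) \<in> linked S
    \<and> strictly_between x y u \<noteq> strictly_between x y w"
  using assms
proof (induction rule: rtrancl_induct)
  case (step b c)
  show ?case
  proof (cases "strictly_between x y a = strictly_between x y b")
    case True
    with step.prems have diff: "strictly_between x y b \<noteq> strictly_between x y c"
      by simp
    have "(a, c) \<in> linked S"
      using step.hyps by (rule rtrancl.rtrancl_into_rtrancl)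
    moreover have "(b, c) \<in> S \<or> (c, b) \<in> S"
      using step.hyps(2) by (simp add: adjrel_def)
    ultimately show ?thesis
      using step.hyps(1) diff by (metis (full_types))
  qed (use step.IH in blast)
qed simp

lemma strictly_between_swap:
  assumes "u \<notin> {x, y}" "w \<notin> {x, y}" "strictly_between x y u \<noteq> strictly_between x y w"
  shows "strictly_between u w x \<noteq> strictly_between u w y"
  using assms unfolding strictly_between_def min_def max_def by (auto split: if_splits)

lemma crosses_if_strictly_between:
  assumes "u < w" "p < q" "p \<notin> {u, w}" "q \<notin> {u, w}"
    and "strictly_between u w p \<noteq> strictly_between u w q"
  shows "crosses (u, w) (p, q)"
  using assms unfolding strictly_between_def crosses_def min_def max_def by (auto split: if_splits)

text \<open>Walking inside one block from \<open>a\<close> to \<open>c\<close> leaves the interval \<open>(b, d)\<close> along an edge \<open>uw\<close>;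
  walking inside the other block from \<open>b\<close> to \<open>d\<close> then leaves the interval \<open>(u, w)\<close> along an edge
  \<open>pq\<close>, and \<open>uw\<close>, \<open>pq\<close> cross.\<close>

lemma unlinked_crossing_edges_if_crossing_partition:
  assumes S: "graph_on n S" and "crossing_partition (blocks n S)"
  shows "\<exists>e\<in>S. \<exists>f\<in>S. crosses e f \<and> (fst e, fst f) \<notin> linked S"
proof -
  obtain B B' a b c d where BB': "B \<in> blocks n S" "B' \<in> blocks n S" "B \<noteq> B'"
    and abcd: "a \<in> B" "c \<in> B" "b \<in> B'" "d \<in> B'" "a < b" "b < c" "c < d"
    using assms(2) unfolding crossing_partition_def by blast
  have unlinked: "(x, y) \<notin> linked S" if "(a, x) \<in> linked S" "(b, y) \<in> linked S" for x y
    using not_linked_if_in_different_blocks[OF BB' abcd(1,3)] that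
    by (meson linked_sym linked_trans)
  have "(a, c) \<in> linked S" "(b, d) \<in> linked S"
    using BB' abcd linked_if_in_same_block by blast+
  moreover have "strictly_between b d a \<noteq> strictly_between b d c"
    using abcd by (simp add: strictly_between_def)
  ultimately obtain u w where uw: "(u, w) \<in> S" "(a, u) \<in> linked S" "(a, w) \<in> linked S"
    "strictly_between b d u \<noteq> strictly_between b d w"
    using edge_leaving_interval by blast
  have "u \<notin> {b, d}" "w \<notin> {b, d}"
    using unlinked[OF uw(2)] unlinked[OF uw(3)] \<open>(b, d) \<in> linked S\<close> by blast+
  then have "strictly_between u w b \<noteq> strictly_between u w d"
    using uw(4) by (rule strictly_between_swap)
  then obtain p q where pq: "(p, q) \<in> S" "(b, p) \<in> linked S" "(b, q) \<in> linked S"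
    "strictly_between u w p \<noteq> strictly_between u w q"
    using edge_leaving_interval[OF \<open>(b, d) \<in> linked S\<close>] by blast
  have "(u, p) \<notin> linked S" "p \<notin> {u, w}" "q \<notin> {u, w}"
    using unlinked uw(2,3) pq(2,3) by auto
  moreover have "u < w" "p < q"
    using S uw(1) pq(1) by (auto simp: graph_on_def)
  ultimately have "crosses (u, w) (p, q)"
    using crosses_if_strictly_between pq(4) by blast
  with \<open>(u, p) \<notin> linked S\<close> show ?thesis
    using pq(1) uw(1) by fastforce
qed

lemma crossing_partitionI:
  assumes "B \<in> P" "B' \<in> P" "B \<noteq> B'" "a \<in> B" "c \<in> B" "b \<in> B'" "d \<in> B'"
    and "a < b" "b < c" "c < d"
  shows "crossing_partition P"
  unfolding crossing_partition_def
  by (rule bexI[of _ B], rule bexI[of _ B'], rule conjI[OF assms(3)], rule bexI[of _ a],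
      rule bexI[of _ c], rule bexI[of _ b], rule bexI[of _ d]) (use assms in auto)

lemma crossing_partition_if_unlinked_crossing_edges:
  assumes H: "graph_on n H" and "e \<in> H" "f \<in> H" "crosses e f" "(fst e, fst f) \<notin> linked H"
  shows "crossing_partition (blocks n H)"
proof -
  obtain a b c d where e: "e = (a, b)" and f: "f = (c, d)"
    by fastforce
  let ?B = "linked H `` {a}" and ?B' = "linked H `` {c}"
  have blocks: "?B \<in> blocks n H" "?B' \<in> blocks n H"
    using H assms(2,3) e f by (auto simp: graph_on_def block_of_vertex)
  have ne: "?B \<noteq> ?B'"
    using assms(5) e f by (simp add: linked_Image_eq_iff)
  have mem: "a \<in> ?B" "b \<in> ?B" "c \<in> ?B'" "d \<in> ?B'"
    using edge_linked assms(2,3) e f by auto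
  have "a < c \<and> c < b \<and> b < d \<or> c < a \<and> a < d \<and> d < b"
    using assms(4) e f by (simp add: crosses_def)
  then show ?thesis
  proof
    assume "a < c \<and> c < b \<and> b < d"
    then show ?thesis
      using crossing_partitionI[OF blocks ne mem(1,2,3,4)] by simp
  next
    assume "c < a \<and> a < d \<and> d < b"
    then show ?thesis
      using crossing_partitionI[OF blocks(2,1) ne[symmetric] mem(3,4,1,2)] by simp
  qed
qed

lemma noncrossing_blocks_iff:
  assumes "graph_on n S"
  shows "\<not> crossing_partition (blocks n S)
    \<longleftrightarrow> (\<forall>e\<in>S. \<forall>f\<in>S. crosses e f \<longrightarrow> (fst e, fst f) \<in> linked S)"
  using unlinked_crossing_edges_if_crossing_partition[OF assms]
    crossing_partition_if_unlinked_crossing_edges[OF assms] by blast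

section \<open>Non-cut vertices\<close>

text \<open>Along a shortest walk from \<open>u\<close> the distance to \<open>u\<close> increases by one at each step, so a
  shortest walk to \<open>w \<noteq> v\<close> never passes through a vertex \<open>v\<close> of maximal distance.\<close>

lemma walk_avoiding_farthest:
  fixes Q :: "('a \<times> 'a) set" and u :: 'a
  defines "d \<equiv> \<lambda>w. LEAST k. (u, w) \<in> Q ^^ k"
  assumes reach: "\<And>w. w \<in> B \<Longrightarrow> (u, w) \<in> Q\<^sup>*" and "Q \<subseteq> B \<times> B"
    and v: "\<And>w. w \<in> B \<Longrightarrow> d w \<le> d v"
    and "w \<in> B" "w \<noteq> v"
  shows "(u, w) \<in> (Q \<inter> (- {v}) \<times> (- {v}))\<^sup>*"
proof -
  have dist: "(u, w) \<in> Q ^^ d w" if "w \<in> B" for w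
  proof -
    have "\<exists>k. (u, w) \<in> Q ^^ k"
      using reach[OF that] by (simp add: rtrancl_power)
    then show ?thesis
      unfolding d_def by (rule LeastI_ex)
  qed
  have "(u, w) \<in> (Q \<inter> (- {v}) \<times> (- {v}))\<^sup>*" if "w \<in> B" "w \<noteq> v" "d w = k" for w k
    using that
  proof (induction k arbitrary: w)
    case 0
    then have "w = u"
      using dist[OF 0(1)] by simp
    then show ?case by simp
  next
    case (Suc k)
    have "(u, w) \<in> Q ^^ Suc k"
      using dist[OF Suc.prems(1)] unfolding Suc.prems(3) .
    then obtain w' where w': "(u, w') \<in> Q ^^ k" "(w', w) \<in> Q"
      by (rule relpow_Suc_E)
    then have "w' \<in> B"
      using \<open>Q \<subseteq> B \<times> B\<close> by blast
    have "d w' \<le> k"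
      using w'(1) unfolding d_def by (rule Least_le)
    moreover have "d w \<le> Suc (d w')"
      using relpow_Suc_I[OF dist[OF \<open>w' \<in> B\<close>] w'(2)] unfolding d_def by (rule Least_le)
    ultimately have "d w' = k"
      using Suc.prems(3) by simp
    then have "w' \<noteq> v"
      using v[OF Suc.prems(1)] Suc.prems(3) by auto
    with w'(2) Suc.prems(2) have "(w', w) \<in> Q \<inter> (- {v}) \<times> (- {v})"
      by blast
    with Suc.IH[OF \<open>w' \<in> B\<close> \<open>w' \<noteq> v\<close> \<open>d w' = k\<close>] show ?case
      by (rule rtrancl.rtrancl_into_rtrancl)
  qed
  with assms(5,6) show ?thesis by blast
qed

lemma exists_non_cut_vertex:
  assumes "finite B" "B \<noteq> {}" "connected_on X B"
  shows "\<exists>v\<in>B. connected_on X (B - {v})"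
proof -
  obtain u where "u \<in> B"
    using assms(2) by blast
  let ?Q = "adjrel (induced_edges X B)"
  define d where "d w = (LEAST k. (u, w) \<in> ?Q ^^ k)" for w
  have "Max (d ` B) \<in> d ` B"
    using assms(1,2) by simp
  then obtain v where "v \<in> B" "d v = Max (d ` B)"
    by auto
  then have farthest: "d w \<le> d v" if "w \<in> B" for w
    using that assms(1) by simp
  have "?Q \<subseteq> B \<times> B" "?Q \<inter> (- {v}) \<times> (- {v}) \<subseteq> adjrel (induced_edges X (B - {v}))"
    by (auto simp: adjrel_iff induced_edges_def)
  moreover have "(u, w) \<in> ?Q\<^sup>*" if "w \<in> B" for w
    using assms(3) \<open>u \<in> B\<close> that by (simp add: connected_on_def)
  ultimately have "(u, w) \<in> linked (induced_edges X (B - {v}))" if "w \<in> B - {v}" for w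
    using walk_avoiding_farthest[of B u ?Q v w] farthest that rtrancl_mono
    unfolding d_def by blast
  then have "connected_on X (B - {v})"
    unfolding connected_on_def by (meson linked_sym linked_trans)
  with \<open>v \<in> B\<close> show ?thesis ..
qed

definition delete_vertex :: "edge set \<Rightarrow> nat \<Rightarrow> edge set" where
  "delete_vertex H v = {e \<in> H. fst e \<noteq> v \<and> snd e \<noteq> v}"

lemma delete_vertex_subset: "delete_vertex H v \<subseteq> H"
  by (auto simp: delete_vertex_def)

lemma linked_delete_vertex_avoids:
  assumes "(x, y) \<in> linked (delete_vertex H v)"
  shows "x = y \<or> x \<noteq> v \<and> y \<noteq> v"
  using assms
  by (induction rule: rtrancl_induct) (auto simp: adjrel_iff delete_vertex_def)

section \<open>Moebius functions and rank functions\<close>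

lemma mobius_eqI:
  assumes finite: "\<And>x. x \<in> P \<Longrightarrow> finite x"
    and f_empty: "f {} = 1"
    and sum_f: "\<And>x. x \<in> P \<Longrightarrow> x \<noteq> {} \<Longrightarrow> (\<Sum>y\<in>{y\<in>P. y \<subseteq> x}. f y) = 0"
    and "x \<in> P"
  shows "mobius P x = f x"
  using \<open>x \<in> P\<close>
proof (induction "card x" arbitrary: x rule: less_induct)
  case less
  show ?case
  proof (cases "x = {}")
    case True
    then show ?thesis by (simp add: f_empty)
  next
    case False
    let ?below = "{y\<in>P. y \<subset> x}"
    have "finite x"
      using finite less.prems by blast
    then have "finite ?below"
      by (rule finite_subset[rotated, OF finite_Pow_iff[THEN iffD2]]) auto
    have "mobius P x = - (\<Sum>y\<in>?below. mobius P y)"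
      using False \<open>finite x\<close> by simp
    also have "\<dots> = - (\<Sum>y\<in>?below. f y)"
      using less.hyps psubset_card_mono[OF \<open>finite x\<close>] by (auto intro!: sum.cong)
    also have "\<dots> = f x"
    proof -
      have "{y\<in>P. y \<subseteq> x} = insert x ?below"
        using less.prems by auto
      then have "f x + (\<Sum>y\<in>?below. f y) = 0"
        using sum_f[OF less.prems False] \<open>finite ?below\<close> by simp
      then show ?thesis by simp
    qed
    finally show ?thesis .
  qed
qed

lemma graded_rank_eqI:
  assumes graded: "graded_rank P rho rk"
    and finite: "\<And>x. x \<in> P \<Longrightarrow> finite x"
    and g_empty: "g {} = 0"
    and g_mono: "\<And>x y. x \<in> P \<Longrightarrow> y \<in> P \<Longrightarrow> x \<subset> y \<Longrightarrow> g x < g y"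
    and g_step: "\<And>y. y \<in> P \<Longrightarrow> y \<noteq> {} \<Longrightarrow> \<exists>x\<in>P. x \<subset> y \<and> g y = g x + 1"
    and "x \<in> P"
  shows "rho x = g x"
  using \<open>x \<in> P\<close>
proof (induction "card x" arbitrary: x rule: less_induct)
  case less
  show ?case
  proof (cases "x = {}")
    case True
    then show ?thesis
      using graded g_empty by (simp add: graded_rank_def)
  next
    case False
    then obtain y where y: "y \<in> P" "y \<subset> x" "g x = g y + 1"
      using g_step less.prems by blast
    have "\<not> (\<exists>z\<in>P. y \<subset> z \<and> z \<subset> x)"
    proof
      assume "\<exists>z\<in>P. y \<subset> z \<and> z \<subset> x"
      then obtain z where "z \<in> P" "y \<subset> z" "z \<subset> x" by blast
      then have "g y < g z" "g z < g x"
        using g_mono y(1) less.prems by blast+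
      with y(3) show False by simp
    qed
    then have "covers P y x"
      using y less.prems by (simp add: covers_def)
    then have "rho x = rho y + 1"
      using graded by (simp add: graded_rank_def)
    moreover have "rho y = g y"
      using less.hyps psubset_card_mono[OF finite[OF less.prems] y(2)] y(1) by blast
    ultimately show ?thesis
      using y(3) by simp
  qed
qed

lemma sum_minus_one_power_card_eq_0:
  assumes "finite N" "\<And>S. S \<in> N \<Longrightarrow> finite S"
    and "\<And>S. S \<in> N \<Longrightarrow> insert a S \<in> N" "\<And>S. S \<in> N \<Longrightarrow> S - {a} \<in> N"
  shows "(\<Sum>S\<in>N. (- 1 :: 'b :: ring_1) ^ card S) = 0"
proof -
  let ?A = "{S\<in>N. a \<notin> S}" and ?B = "{S\<in>N. a \<in> S}"
  have "?B = insert a ` ?A"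
  proof (intro equalityI subsetI)
    fix S assume "S \<in> ?B"
    then have "S = insert a (S - {a})" "S - {a} \<in> ?A"
      using assms(4) by auto
    then show "S \<in> insert a ` ?A" by blast
  qed (use assms(3) in auto)
  moreover have "inj_on (insert a) ?A"
    by (rule inj_onI) (metis mem_Collect_eq insert_ident)
  ultimately have "(\<Sum>S\<in>?B. (- 1 :: 'b) ^ card S) = (\<Sum>S\<in>?A. (- 1) ^ card (insert a S))"
    by (simp add: sum.reindex)
  also have "\<dots> = - (\<Sum>S\<in>?A. (- 1) ^ card S)"
    using assms(2) by (simp add: sum_negf)
  moreover have "N = ?A \<union> ?B" "?A \<inter> ?B = {}"
    by blast+
  ultimately show ?thesis
    using sum.union_disjoint[of ?A ?B "\<lambda>S. (- 1 :: 'b) ^ card S"] assms(1) by simp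
qed

lemma linear_order_on_has_least:
  assumes "linear_order_on A r" "finite C" "C \<noteq> {}" "C \<subseteq> A"
  shows "\<exists>m\<in>C. \<forall>c\<in>C. (m, c) \<in> r"
  using assms(2-4)
proof (induction C rule: finite_ne_induct)
  case (singleton x)
  then show ?case
    using assms(1) by (auto simp: linear_order_on_def partial_order_on_def preorder_on_def refl_on_def)
next
  case (insert x C)
  then obtain m where m: "m \<in> C" "\<forall>c\<in>C. (m, c) \<in> r"
    by auto
  have "partial_order_on A r" "total_on A r"
    using assms(1) by (simp_all add: linear_order_on_def)
  moreover have "x \<in> A" "m \<in> A"
    using insert.prems m(1) by auto
  ultimately have order: "(x, x) \<in> r" "(x, m) \<in> r \<or> (m, x) \<in> r" "trans r"
    by (auto simp: partial_order_on_def preorder_on_def refl_on_def total_on_def) metis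
  show ?case
  proof (cases "(x, m) \<in> r")
    case True
    with m(2) order(1,3) have "\<forall>c\<in>insert x C. (x, c) \<in> r"
      by (auto dest: transD)
    then show ?thesis by blast
  next
    case False
    with m order(2) show ?thesis by blast
  qed
qed

lemma min_edge_eq:
  assumes "antisym r" "m \<in> C" "\<forall>c\<in>C. (m, c) \<in> r"
  shows "min_edge r C = m"
  unfolding min_edge_def
proof (rule the_equality)
  show "m \<in> C \<and> (\<forall>c\<in>C. (m, c) \<in> r)"
    using assms(2,3) by blast
  fix e assume "e \<in> C \<and> (\<forall>c\<in>C. (e, c) \<in> r)"
  with assms show "e = m"
    by (meson antisymD)
qed

lemma sum_group_by_card:
  fixes f :: "nat \<Rightarrow> 'a :: semiring_1"
  assumes "finite N" "\<And>S. S \<in> N \<Longrightarrow> card S \<le> m"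
  shows "(\<Sum>S\<in>N. f (card S)) = (\<Sum>k\<in>{0..m}. of_nat (card {S\<in>N. card S = k}) * f k)"
proof -
  have "card ` N \<subseteq> {0..m}"
    using assms(2) by auto
  then have "(\<Sum>S\<in>N. f (card S)) = (\<Sum>k\<in>{0..m}. \<Sum>S\<in>{S\<in>N. card S = k}. f (card S))"
    using sum.group[OF assms(1) finite_atLeastAtMost, of card 0 m "\<lambda>S. f (card S)"] by simp
  also have "\<dots> = (\<Sum>k\<in>{0..m}. \<Sum>S\<in>{S\<in>N. card S = k}. f k)"
    by (intro sum.cong) auto
  finally show ?thesis
    by simp
qed

section \<open>NBC sets\<close>

lemma broken_circuits_mono: "X \<subseteq> Y \<Longrightarrow> broken_circuits r X \<subseteq> broken_circuits r Y"
  unfolding broken_circuits_def using cycle_sets_mono by blast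

lemma acyclic_if_nbc:
  assumes "is_nbc r X S"
  shows "cycle_sets S = {}"
proof (rule ccontr)
  assume "cycle_sets S \<noteq> {}"
  then obtain C where C: "C \<in> cycle_sets S"
    by blast
  moreover have "S \<subseteq> X"
    using assms by (simp add: is_nbc_def)
  ultimately have "C - {min_edge r C} \<in> broken_circuits r X"
    using cycle_sets_mono unfolding broken_circuits_def by blast
  moreover have "C \<subseteq> S"
    using C by (auto simp: cycle_sets_def)
  ultimately show False
    using assms by (auto simp: is_nbc_def)
qed

lemma ncnbc_empty: "ncnbc r {} 0 = 1"
proof -
  have "{S. is_ncnbc r {} S \<and> card S = 0} = {{}}"
    by (auto simp: is_ncnbc_def is_nbc_def broken_circuits_def cycle_sets_empty)
  then show ?thesis
    by (simp add: ncnbc_def)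
qed

lemma J_edges_subset_candidate:
  assumes "crossing_closed_pair n E e f" "B \<in> J_candidates n E e f"
  shows "J_edges n E e f \<subseteq> induced_edges E B"
proof -
  have "finite (J_candidates n E e f)"
    by (rule finite_subset[of _ "Pow {1..n}"]) (auto simp: J_candidates_def)
  then obtain S where S: "S \<in> J_candidates n E e f" "S \<subseteq> B"
    "\<forall>S'\<in>J_candidates n E e f. S' \<subseteq> S \<longrightarrow> S = S'"
    using finite_has_minimal2[OF _ assms(2)] by blast
  then have "is_minimal_J n E e f S"
    by (auto simp: is_minimal_J_def)
  with assms(1) have "J_edges n E e f = induced_edges E S"
    unfolding J_edges_def crossing_closed_pair_def by (simp add: the1_equality)
  also have "\<dots> \<subseteq> induced_edges E B"
    using S(2) by (auto simp: induced_edges_def)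
  finally show ?thesis .
qed

section \<open>Bonds and noncrossing bonds\<close>

locale numbered_graph =
  fixes n :: nat and E :: "edge set"
  assumes graph_on_E: "graph_on n E"
begin

lemma graph_on_subgraph: "H \<subseteq> E \<Longrightarrow> graph_on n H"
  using graph_on_E by (rule graph_on_subset)

lemma finite_E: "finite E"
  using graph_on_E by (rule finite_if_graph_on)

lemma edge_range: "(i, j) \<in> E \<Longrightarrow> i \<in> {1..n} \<and> j \<in> {1..n} \<and> i < j"
  using graph_on_E by (auto simp: graph_on_def)

lemma is_bond_iff: "is_bond n E H \<longleftrightarrow> H \<subseteq> E \<and> (\<forall>e\<in>E. e \<in> linked H \<longrightarrow> e \<in> H)"
proof
  assume bond: "is_bond n E H"
  have "(i, j) \<in> H" if "(i, j) \<in> E" "(i, j) \<in> linked H" for i j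
  proof -
    let ?C = "linked H `` {i}"
    have "?C \<in> blocks n H"
      using edge_range[OF that(1)] by (simp add: block_of_vertex)
    moreover have "(i, j) \<in> induced_edges E ?C"
      using that by (simp add: induced_edges_def)
    ultimately have "(i, j) \<in> induced_edges H ?C"
      using bond by (simp add: is_bond_def)
    then show ?thesis
      by (simp add: induced_edges_def)
  qed
  with bond show "H \<subseteq> E \<and> (\<forall>e\<in>E. e \<in> linked H \<longrightarrow> e \<in> H)"
    by (auto simp: is_bond_def)
next
  assume closed: "H \<subseteq> E \<and> (\<forall>e\<in>E. e \<in> linked H \<longrightarrow> e \<in> H)"
  have "induced_edges E C \<subseteq> induced_edges H C" if "C \<in> blocks n H" for C
    using closed linked_if_in_same_block[OF that] by (auto simp: induced_edges_def)
  with closed show "is_bond n E H"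
    by (auto simp: is_bond_def induced_edges_def)
qed

lemma bond_subset_E: "is_bond n E H \<Longrightarrow> H \<subseteq> E"
  by (simp add: is_bond_def)

lemma edge_in_bond_if_linked: "is_bond n E H \<Longrightarrow> e \<in> E \<Longrightarrow> e \<in> linked H \<Longrightarrow> e \<in> H"
  by (simp add: is_bond_iff)

definition bond_closure :: "edge set \<Rightarrow> edge set" where
  "bond_closure S = {e \<in> E. e \<in> linked S}"

lemma subset_bond_closure: "S \<subseteq> E \<Longrightarrow> S \<subseteq> bond_closure S"
  unfolding bond_closure_def using edge_linked(1)[of _ _ S] by auto

lemma linked_bond_closure:
  assumes "S \<subseteq> E"
  shows "linked (bond_closure S) = linked S"
proof
  show "linked S \<subseteq> linked (bond_closure S)"
    using linked_mono subset_bond_closure[OF assms] by blast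
  have "adjrel (bond_closure S) \<subseteq> linked S"
    by (auto simp: bond_closure_def adjrel_iff intro: linked_sym)
  then have "linked (bond_closure S) \<subseteq> (linked S)\<^sup>*"
    by (rule rtrancl_mono)
  then show "linked (bond_closure S) \<subseteq> linked S"
    by simp
qed

lemma blocks_bond_closure: "S \<subseteq> E \<Longrightarrow> blocks n (bond_closure S) = blocks n S"
  by (simp add: blocks_def linked_bond_closure)

lemma bond_bond_closure: "S \<subseteq> E \<Longrightarrow> is_bond n E (bond_closure S)"
  by (simp add: is_bond_iff linked_bond_closure) (simp add: bond_closure_def)

lemma bond_closure_least: "S \<subseteq> H \<Longrightarrow> is_bond n E H \<Longrightarrow> bond_closure S \<subseteq> H"
  unfolding bond_closure_def using linked_mono edge_in_bond_if_linked by blast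

lemma connected_on_block_of_bond:
  assumes "is_bond n E H" "C \<in> blocks n H"
  shows "connected_on E C"
  using connected_on_block[OF assms(2)] assms by (simp add: connected_on_def is_bond_def)

lemma bond_eq_if_cc_eq:
  assumes "is_bond n E K" "is_bond n E H" "K \<subseteq> H" "cc n H = cc n K"
  shows "K = H"
proof -
  have "e \<in> K" if "e \<in> H" for e
  proof -
    obtain i j where e: "e = (i, j)" by fastforce
    with that assms(2) have "(i, j) \<in> E" "(i, j) \<in> linked H"
      using edge_linked bond_subset_E by blast+
    then have "(i, j) \<in> linked K"
      using linked_if_cc_eq[OF linked_mono[OF assms(3)] assms(4)] edge_range by blast
    with assms(1) \<open>(i, j) \<in> E\<close> show ?thesis
      using e edge_in_bond_if_linked by blast
  qed
  with assms(3) show ?thesis by blast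
qed

lemma cc_strict_antimono:
  assumes "is_bond n E K" "is_bond n E H" "K \<subset> H"
  shows "cc n H < cc n K"
proof -
  have "cc n H \<le> cc n K"
    using cc_antimono linked_mono assms(3) by blast
  moreover have "cc n H \<noteq> cc n K"
    using bond_eq_if_cc_eq[OF assms(1,2)] assms(3) by blast
  ultimately show ?thesis by simp
qed

lemma NC_iff: "H \<in> NC n E \<longleftrightarrow> is_bond n E H \<and> \<not> crossing_partition (blocks n H)"
  by (simp add: NC_def noncrossing_bond_def)

lemma NC_subset_E: "H \<in> NC n E \<Longrightarrow> H \<subseteq> E"
  by (simp add: NC_iff is_bond_def)

lemma finite_NC: "finite (NC n E)"
  using finite_subset[of "NC n E" "Pow E"] NC_subset_E finite_E by blast

lemma crossing_edges_linked_if_NC: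
  assumes "H \<in> NC n E" "e \<in> H" "f \<in> H" "crosses e f"
  shows "(fst e, fst f) \<in> linked H"
  using assms noncrossing_blocks_iff[OF graph_on_subgraph[OF NC_subset_E]] by (simp add: NC_iff)

lemma bond_closure_in_NC:
  assumes "S \<subseteq> E" "\<forall>e\<in>S. \<forall>f\<in>S. \<not> crosses e f"
  shows "bond_closure S \<in> NC n E"
  using assms noncrossing_blocks_iff[OF graph_on_subgraph[OF assms(1)]]
  by (simp add: NC_iff bond_bond_closure blocks_bond_closure)

lemma E_in_NC:
  assumes "crossing_closed n E"
  shows "E \<in> NC n E"
proof -
  have "(fst e, fst f) \<in> linked E" if "e \<in> E" "f \<in> E" "crosses e f" for e f
  proof -
    have "\<exists>!S. is_minimal_J n E e f S"
      using assms that unfolding crossing_closed_def crossing_closed_pair_def by blast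
    then obtain S where "is_minimal_J n E e f S"
      by blast
    then have "connected_on E S" "fst e \<in> S" "fst f \<in> S"
      by (auto simp: is_minimal_J_def J_candidates_def induced_edges_def)
    then show ?thesis
      by (rule linked_if_connected_on)
  qed
  moreover have "is_bond n E E"
    by (simp add: is_bond_iff)
  ultimately show ?thesis
    using noncrossing_blocks_iff[OF graph_on_E] by (simp add: NC_iff)
qed

context
  fixes H :: "edge set" and v :: nat
  assumes bond: "is_bond n E H" and v: "v \<in> {1..n}"
    and non_cut: "connected_on E (linked H `` {v} - {v})"
begin

lemma linked_delete_vertex_iff:
  assumes "x \<noteq> v" "y \<noteq> v"
  shows "(x, y) \<in> linked (delete_vertex H v) \<longleftrightarrow> (x, y) \<in> linked H"
proof
  show "(x, y) \<in> linked (delete_vertex H v) \<Longrightarrow> (x, y) \<in> linked H"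
    using linked_mono[OF delete_vertex_subset] by blast
next
  let ?B = "linked H `` {v}"
  assume xy: "(x, y) \<in> linked H"
  show "(x, y) \<in> linked (delete_vertex H v)"
  proof (cases "x \<in> ?B")
    case True
    then have "x \<in> ?B - {v}" "y \<in> ?B - {v}"
      using assms xy by (auto intro: linked_trans)
    then have "(x, y) \<in> linked (induced_edges E (?B - {v}))"
      using non_cut by (simp add: connected_on_def)
    moreover have "induced_edges E (?B - {v}) \<subseteq> delete_vertex H v"
    proof
      fix e assume "e \<in> induced_edges E (?B - {v})"
      then obtain a b where e: "e = (a, b)" "(a, b) \<in> E" "a \<in> ?B - {v}" "b \<in> ?B - {v}"
        by (auto simp: induced_edges_def)
      then have "(a, b) \<in> linked H"
        by (blast intro: linked_sym linked_trans)
      with e show "e \<in> delete_vertex H v"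
        using edge_in_bond_if_linked[OF bond] by (simp add: delete_vertex_def)
    qed
    ultimately show ?thesis
      using linked_mono by blast
  next
    case False
    then have "v \<notin> linked H `` {x}"
      by (auto intro: linked_sym)
    then have "induced_edges H (linked H `` {x}) \<subseteq> delete_vertex H v"
      by (auto simp: induced_edges_def delete_vertex_def)
    then show ?thesis
      using linked_induced_block[OF xy] linked_mono by blast
  qed
qed

lemma linked_delete_vertex_Image:
  "linked (delete_vertex H v) `` {w} = (if w = v then {v} else linked H `` {w} - {v})"
  using linked_delete_vertex_avoids[of _ _ H v] linked_delete_vertex_iff by auto

lemma bond_delete_vertex: "is_bond n E (delete_vertex H v)"
  unfolding is_bond_iff
proof (intro conjI ballI impI)
  show "delete_vertex H v \<subseteq> E"
    using bond delete_vertex_subset by (auto simp: is_bond_iff)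
  fix e assume "e \<in> E" "e \<in> linked (delete_vertex H v)"
  moreover obtain i j where e: "e = (i, j)" by fastforce
  ultimately have "i \<noteq> v" "j \<noteq> v" "(i, j) \<in> linked H"
    using linked_delete_vertex_avoids[of i j H v] linked_delete_vertex_iff edge_range by auto
  then show "e \<in> delete_vertex H v"
    using bond \<open>e \<in> E\<close> e by (simp add: is_bond_iff delete_vertex_def)
qed

lemma blocks_delete_vertex:
  assumes "y \<in> linked H `` {v}" "y \<noteq> v"
  shows "blocks n (delete_vertex H v)
    = insert {v} (insert (linked H `` {v} - {v}) (blocks n H - {linked H `` {v}}))"
    (is "_ = insert {v} (insert (?B - {v}) (blocks n H - {?B}))")
proof -
  have y: "y \<in> {1..n}" "linked H `` {y} = ?B"
    using assms linked_in_range[OF graph_on_subgraph[OF bond_subset_E[OF bond]]]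
    by (auto simp: linked_Image_eq_iff intro: linked_sym)
  have other: "linked H `` {w} - {v} = linked H `` {w}" "linked H `` {w} \<noteq> ?B" if "w \<notin> ?B" for w
    using that by (auto simp: linked_Image_eq_iff intro: linked_sym)
  have same: "linked H `` {w} = ?B" if "w \<in> ?B" for w
    using that by (auto simp: linked_Image_eq_iff intro: linked_sym)
  have "blocks n (delete_vertex H v)
      = (\<lambda>w. if w = v then {v} else linked H `` {w} - {v}) ` {1..n}"
    by (simp add: blocks_eq_image linked_delete_vertex_Image)
  also have "\<dots> = insert {v} (insert (?B - {v}) (blocks n H - {?B}))"
  proof (intro equalityI subsetI)
    fix C assume "C \<in> (\<lambda>w. if w = v then {v} else linked H `` {w} - {v}) ` {1..n}"
    then obtain w where "w \<in> {1..n}" "C = (if w = v then {v} else linked H `` {w} - {v})"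
      by blast
    then show "C \<in> insert {v} (insert (?B - {v}) (blocks n H - {?B}))"
      using other[of w] same[of w] by (cases "w \<in> ?B") (auto simp: block_of_vertex)
  next
    fix C assume "C \<in> insert {v} (insert (?B - {v}) (blocks n H - {?B}))"
    moreover have "\<exists>w\<in>{1..n}. w \<notin> ?B \<and> C = linked H `` {w}" if C: "C \<in> blocks n H - {?B}"
    proof -
      obtain w where "w \<in> {1..n}" "C = linked H `` {w}"
        using C unfolding blocks_eq_image by blast
      with C same show ?thesis by blast
    qed
    ultimately show "C \<in> (\<lambda>w. if w = v then {v} else linked H `` {w} - {v}) ` {1..n}"
      using v y assms(2) other by (auto simp: image_iff)
  qed
  finally show ?thesis .
qed

lemma cc_delete_vertex:
  assumes "y \<in> linked H `` {v}" "y \<noteq> v"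
  shows "cc n (delete_vertex H v) = cc n H + 1"
proof -
  let ?B = "linked H `` {v}"
  have B: "?B \<in> blocks n H"
    using v by (rule block_of_vertex)
  have "{v} \<notin> blocks n H"
    using block_eq_Image[of "{v}" n H v] assms by auto
  moreover have "?B - {v} \<notin> blocks n H"
    using block_eq_Image[of "?B - {v}" n H y] block_eq_Image[OF B, of y] assms by auto
  moreover have "{v} \<noteq> ?B - {v}" "card (blocks n H) > 0"
    using B finite_blocks card_gt_0_iff by blast+
  ultimately show ?thesis
    unfolding cc_def blocks_delete_vertex[OF assms] using finite_blocks B
    by (simp add: card_Diff_singleton_if)
qed

lemma NC_delete_vertex:
  assumes "H \<in> NC n E"
  shows "delete_vertex H v \<in> NC n E"
proof -
  have "(fst e, fst f) \<in> linked (delete_vertex H v)"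
    if "e \<in> delete_vertex H v" "f \<in> delete_vertex H v" "crosses e f" for e f
    using that crossing_edges_linked_if_NC[OF assms] linked_delete_vertex_iff
    by (auto simp: delete_vertex_def)
  then show ?thesis
    using noncrossing_blocks_iff[OF graph_on_subgraph[OF bond_subset_E[OF bond_delete_vertex]]]
    by (simp add: NC_iff bond_delete_vertex)
qed

end

lemma non_cut_vertex_of_bond:
  assumes bond: "is_bond n E H" and ab: "(a, b) \<in> H"
  obtains v y where "v \<in> {1..n}" "y \<in> linked H `` {v}" "y \<noteq> v"
    "connected_on E (linked H `` {v} - {v})"
proof -
  have "a \<in> {1..n}" "a < b"
    using ab edge_range bond_subset_E[OF bond] by blast+
  let ?B = "linked H `` {a}"
  have B: "?B \<in> blocks n H"
    using \<open>a \<in> {1..n}\<close> by (rule block_of_vertex)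
  have B_range: "?B \<subseteq> {1..n}"
    using block_subset[OF graph_on_subgraph[OF bond_subset_E[OF bond]] B] .
  have "a \<in> ?B" "b \<in> ?B"
    using edge_linked[OF ab] by auto
  moreover have "finite ?B"
    using B_range finite_subset by blast
  moreover have "connected_on E ?B"
    using bond B by (rule connected_on_block_of_bond)
  ultimately obtain v where "v \<in> ?B" and non_cut: "connected_on E (?B - {v})"
    using exists_non_cut_vertex by blast
  have Bv: "linked H `` {v} = ?B"
    using block_eq_Image[OF B \<open>v \<in> ?B\<close>] by simp
  have "a \<noteq> v \<or> b \<noteq> v"
    using \<open>a < b\<close> by auto
  then obtain y where "y \<in> ?B" "y \<noteq> v"
    using \<open>a \<in> ?B\<close> \<open>b \<in> ?B\<close> by blast
  moreover have "v \<in> {1..n}"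
    using B_range \<open>v \<in> ?B\<close> by blast
  ultimately show ?thesis
    using non_cut by (intro that[of v y]) (simp_all add: Bv)
qed

lemma NC_lower_cover_exists:
  assumes H: "H \<in> NC n E" and "H \<noteq> {}"
  shows "\<exists>K\<in>NC n E. K \<subset> H \<and> cc n K = cc n H + 1"
proof -
  have bond: "is_bond n E H"
    using H by (simp add: NC_iff)
  obtain a b where "(a, b) \<in> H"
    using \<open>H \<noteq> {}\<close> by fastforce
  then obtain v y where v: "v \<in> {1..n}" "y \<in> linked H `` {v}" "y \<noteq> v"
    and non_cut: "connected_on E (linked H `` {v} - {v})"
    using non_cut_vertex_of_bond[OF bond] by metis
  have "cc n (delete_vertex H v) = cc n H + 1"
    using cc_delete_vertex[OF bond v(1) non_cut v(2,3)] .
  moreover have "delete_vertex H v \<in> NC n E"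
    using NC_delete_vertex[OF bond v(1) non_cut H] .
  moreover have "delete_vertex H v \<noteq> H"
    using calculation(1) by auto
  then have "delete_vertex H v \<subset> H"
    using delete_vertex_subset by blast
  ultimately show ?thesis by blast
qed

definition bond_rank :: "edge set \<Rightarrow> nat" where
  "bond_rank H = n - cc n H"

lemma bond_rank_empty: "bond_rank {} = 0"
  by (simp add: bond_rank_def cc_empty)

lemma bond_rank_strict_mono:
  assumes "is_bond n E K" "is_bond n E H" "K \<subset> H"
  shows "bond_rank K < bond_rank H"
  using cc_strict_antimono[OF assms] cc_le[of n K] by (simp add: bond_rank_def)

lemma block_J_candidate:
  assumes H: "H \<in> NC n E" and "e \<in> H" "f \<in> H" "crosses e f"
  shows "linked H `` {fst e} \<in> J_candidates n E e f"
proof -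
  have bond: "is_bond n E H"
    using H by (simp add: NC_iff)
  let ?B = "linked H `` {fst e}"
  have "fst e \<in> {1..n}"
    using assms(2) bond_subset_E[OF bond] edge_range[of "fst e" "snd e"] by auto
  then have B: "?B \<in> blocks n H"
    by (rule block_of_vertex)
  obtain a b c d where e: "e = (a, b)" and f: "f = (c, d)"
    by fastforce
  have "(a, c) \<in> linked H"
    using crossing_edges_linked_if_NC[OF assms] e f by simp
  moreover have "(a, b) \<in> linked H" "(c, d) \<in> linked H"
    using edge_linked(1) assms(2,3) e f by simp_all
  ultimately have "a \<in> ?B" "b \<in> ?B" "c \<in> ?B" "d \<in> ?B"
    using e by (simp_all add: linked_trans)
  then have "e \<in> induced_edges E ?B" "f \<in> induced_edges E ?B"
    using assms(2,3) bond_subset_E[OF bond] e f by (auto simp: induced_edges_def)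
  moreover have "?B \<subseteq> {1..n}"
    using block_subset[OF graph_on_subgraph[OF bond_subset_E[OF bond]] B] .
  ultimately show ?thesis
    using connected_on_block_of_bond[OF bond B] by (simp add: J_candidates_def)
qed

lemma J_edges_subset_NC:
  assumes "crossing_closed n E" and H: "H \<in> NC n E" and "e \<in> H" "f \<in> H" "crosses e f"
  shows "J_edges n E e f \<subseteq> H"
proof -
  have "crossing_closed_pair n E e f"
    using assms NC_subset_E[OF H] unfolding crossing_closed_def by blast
  then have "J_edges n E e f \<subseteq> induced_edges E (linked H `` {fst e})"
    using J_edges_subset_candidate block_J_candidate[OF H assms(3-5)] by blast
  also have "\<dots> = induced_edges H (linked H `` {fst e})"
    using H block_of_vertex[of "fst e" n H] assms(3) NC_subset_E[OF H] edge_range[of "fst e" "snd e"]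
    by (auto simp: NC_iff is_bond_def)
  finally show ?thesis
    by (auto simp: induced_edges_def)
qed

lemma cycle_subset_bond:
  assumes "is_bond n E K" "C \<in> cycle_sets X" "X \<subseteq> E" "C - {m} \<subseteq> K"
  shows "C \<subseteq> K"
proof
  fix c assume "c \<in> C"
  show "c \<in> K"
  proof (cases "c = m")
    case True
    have "C \<subseteq> E"
      using assms(2,3) by (auto simp: cycle_sets_def)
    moreover have "(fst c, snd c) \<in> linked K"
      using cycle_edge_linked_in_rest[OF assms(2) \<open>c \<in> C\<close>] linked_mono assms(4) True by blast
    then have "c \<in> linked K"
      by simp
    ultimately show ?thesis
      using edge_in_bond_if_linked[OF assms(1)] \<open>c \<in> C\<close> by blast
  qed (use assms(4) \<open>c \<in> C\<close> in blast)
qed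

lemma card_eq_bond_rank_if_acyclic:
  assumes "S \<subseteq> E" "cycle_sets S = {}"
  shows "card S = bond_rank (bond_closure S)"
  using card_plus_cc_if_acyclic[OF graph_on_subgraph[OF assms(1)] assms(2)]
  by (simp add: bond_rank_def cc_def blocks_bond_closure[OF assms(1)])

end

section \<open>Upper crossing closed graphs\<close>

locale ucc_graph = numbered_graph +
  fixes r :: "(edge \<times> edge) set"
  assumes linear_order: "linear_order_on E r"
    and upper_crossing_closed: "upper_crossing_closed n E r"
begin

lemma crossing_closed: "crossing_closed n E"
  using upper_crossing_closed by (simp add: upper_crossing_closed_def)

lemma antisym_r: "antisym r"
  using linear_order by (simp add: linear_order_on_def partial_order_on_def)

lemma least_edge_exists:
  assumes "H \<subseteq> E" "H \<noteq> {}"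
  shows "\<exists>m\<in>H. \<forall>c\<in>H. (m, c) \<in> r"
  using linear_order_on_has_least[OF linear_order finite_subset[OF assms(1) finite_E] assms(2,1)] .

text \<open>This is where upper crossing closedness enters: an edge crossing the least edge \<open>m\<close> of
  a noncrossing bond would force an edge of the bond below \<open>m\<close>.\<close>

lemma least_edge_crosses_nothing:
  assumes H: "H \<in> NC n E" and m: "m \<in> H" "\<forall>c\<in>H. (m, c) \<in> r" and "f \<in> H"
  shows "\<not> crosses m f"
proof
  assume "crosses m f"
  moreover have "m \<in> E" "f \<in> E"
    using NC_subset_E[OF H] m(1) \<open>f \<in> H\<close> by auto
  ultimately obtain h where h: "h \<in> J_edges n E m f" "(h, m) \<in> r" "h \<noteq> m"
    using upper_crossing_closed unfolding upper_crossing_closed_def by blast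
  moreover have "J_edges n E m f \<subseteq> H"
    using J_edges_subset_NC[OF crossing_closed H m(1) \<open>f \<in> H\<close> \<open>crosses m f\<close>] .
  ultimately have "(m, h) \<in> r"
    using m(2) by blast
  with h(2,3) antisym_r show False
    unfolding antisym_def by blast
qed

lemma ncnbc_insert_least_iff:
  assumes H: "H \<in> NC n E" and m: "m \<in> H" "\<forall>c\<in>H. (m, c) \<in> r"
  shows "is_ncnbc r H (insert m S) \<longleftrightarrow> is_ncnbc r H S"
proof -
  have "m \<notin> B" if B: "B \<in> broken_circuits r H" for B
  proof -
    obtain C where C: "C \<in> cycle_sets H" "B = C - {min_edge r C}"
      using B by (auto simp: broken_circuits_def)
    then have "C \<subseteq> H"
      by (auto simp: cycle_sets_def)
    then have "m \<in> C \<Longrightarrow> min_edge r C = m"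
      using min_edge_eq[OF antisym_r] m(2) by blast
    with C(2) show ?thesis by blast
  qed
  then have nbc: "is_nbc r H (insert m S) \<longleftrightarrow> is_nbc r H S"
    unfolding is_nbc_def using m(1) by blast
  have no_cross: "\<not> crosses m f" "\<not> crosses f m" if "f \<in> H" for f
    using least_edge_crosses_nothing[OF H m that] crosses_sym by auto
  show ?thesis
  proof
    assume "is_ncnbc r H (insert m S)"
    with nbc show "is_ncnbc r H S"
      by (auto simp: is_ncnbc_def)
  next
    assume S: "is_ncnbc r H S"
    then have "S \<subseteq> H"
      by (simp add: is_ncnbc_def is_nbc_def)
    with S nbc no_cross not_crosses_self show "is_ncnbc r H (insert m S)"
      by (auto simp: is_ncnbc_def)
  qed
qed

lemma finite_ncnbc:
  assumes "H \<subseteq> E"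
  shows "finite {S. is_ncnbc r H S}"
proof (rule finite_subset)
  show "{S. is_ncnbc r H S} \<subseteq> Pow H"
    by (auto simp: is_ncnbc_def is_nbc_def)
  show "finite (Pow H)"
    using finite_subset[OF assms finite_E] by simp
qed

lemma sum_ncnbc_eq_0:
  assumes H: "H \<in> NC n E" "H \<noteq> {}"
  shows "(\<Sum>S | is_ncnbc r H S. (- 1 :: int) ^ card S) = 0"
proof -
  have "H \<subseteq> E"
    using NC_subset_E[OF H(1)] .
  then obtain m where m: "m \<in> H" "\<forall>c\<in>H. (m, c) \<in> r"
    using least_edge_exists H(2) by blast
  have "finite S" if "is_ncnbc r H S" for S
    using that finite_subset[OF _ finite_subset[OF \<open>H \<subseteq> E\<close> finite_E]]
    by (auto simp: is_ncnbc_def is_nbc_def)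
  moreover have "is_ncnbc r H (S - {m})" if S: "is_ncnbc r H S" for S
  proof (cases "m \<in> S")
    case True
    then have "insert m (S - {m}) = S"
      by blast
    with S show ?thesis
      using ncnbc_insert_least_iff[OF H(1) m, of "S - {m}"] by simp
  qed (use S in simp)
  ultimately show ?thesis
    using finite_ncnbc[OF \<open>H \<subseteq> E\<close>] ncnbc_insert_least_iff[OF H(1) m]
    by (intro sum_minus_one_power_card_eq_0[where a = m]) auto
qed

definition spanning_ncnbc :: "edge set \<Rightarrow> edge set set" where
  "spanning_ncnbc K = {S. is_ncnbc r K S \<and> card S = bond_rank K}"

lemma spanning_ncnbc_bond_closure:
  assumes H: "H \<in> NC n E" and S: "is_ncnbc r H S"
  shows "bond_closure S \<in> NC n E" "bond_closure S \<subseteq> H" "S \<in> spanning_ncnbc (bond_closure S)"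
proof -
  have "S \<subseteq> H"
    using S by (simp add: is_ncnbc_def is_nbc_def)
  then have "S \<subseteq> E"
    using NC_subset_E[OF H] by blast
  then show "bond_closure S \<in> NC n E"
    using S bond_closure_in_NC by (simp add: is_ncnbc_def)
  show closure_H: "bond_closure S \<subseteq> H"
    using bond_closure_least[OF \<open>S \<subseteq> H\<close>] H by (simp add: NC_iff)
  have "is_nbc r H S" "\<forall>e\<in>S. \<forall>f\<in>S. \<not> crosses e f"
    using S by (simp_all add: is_ncnbc_def)
  then have "is_ncnbc r (bond_closure S) S"
    using subset_bond_closure[OF \<open>S \<subseteq> E\<close>] broken_circuits_mono[OF closure_H, of r]
    by (auto simp: is_ncnbc_def is_nbc_def)
  moreover have "card S = bond_rank (bond_closure S)"
    using card_eq_bond_rank_if_acyclic[OF \<open>S \<subseteq> E\<close> acyclic_if_nbc[OF \<open>is_nbc r H S\<close>]] .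
  ultimately show "S \<in> spanning_ncnbc (bond_closure S)"
    by (simp add: spanning_ncnbc_def)
qed

lemma bond_closure_spanning_ncnbc:
  assumes K: "K \<in> NC n E" and S: "S \<in> spanning_ncnbc K"
  shows "bond_closure S = K"
proof -
  have SK: "S \<subseteq> K" and "is_nbc r K S" and card: "card S = n - cc n K"
    using S by (auto simp: spanning_ncnbc_def is_ncnbc_def is_nbc_def bond_rank_def)
  have bond: "is_bond n E K"
    using K by (simp add: NC_iff)
  have "S \<subseteq> E"
    using SK bond_subset_E[OF bond] by blast
  have "card S + cc n S = n"
    using card_plus_cc_if_acyclic graph_on_subgraph[OF \<open>S \<subseteq> E\<close>] acyclic_if_nbc[OF \<open>is_nbc r K S\<close>] .
  moreover have "cc n K \<le> cc n S"
    using cc_antimono linked_mono[OF SK] by blast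
  ultimately have "cc n K = cc n S"
    using card cc_le[of n K] by linarith
  then have "(i, j) \<in> linked S" if "(i, j) \<in> K" for i j
    using linked_if_cc_eq[OF linked_mono[OF SK]] edge_linked(1)[OF that]
      edge_range that bond_subset_E[OF bond] by blast
  then have "K \<subseteq> bond_closure S"
    using bond_subset_E[OF bond] by (auto simp: bond_closure_def)
  with bond_closure_least[OF SK bond] show ?thesis
    by blast
qed

lemma ncnbc_if_spanning_ncnbc:
  assumes "H \<in> NC n E" "K \<in> NC n E" "K \<subseteq> H" and S: "S \<in> spanning_ncnbc K"
  shows "is_ncnbc r H S"
proof -
  have "is_ncnbc r K S"
    using S by (simp add: spanning_ncnbc_def)
  have "\<not> C - {min_edge r C} \<subseteq> S" if "C \<in> cycle_sets H" for C
  proof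
    assume "C - {min_edge r C} \<subseteq> S"
    moreover have "S \<subseteq> K"
      using \<open>is_ncnbc r K S\<close> by (simp add: is_ncnbc_def is_nbc_def)
    ultimately have "C \<subseteq> K"
      using cycle_subset_bond that NC_subset_E assms(1,2) by (meson NC_iff order_trans)
    then have "C - {min_edge r C} \<in> broken_circuits r K"
      using that by (auto simp: broken_circuits_def cycle_sets_def)
    with \<open>is_ncnbc r K S\<close> \<open>C - {min_edge r C} \<subseteq> S\<close> show False
      by (simp add: is_ncnbc_def is_nbc_def)
  qed
  with \<open>is_ncnbc r K S\<close> assms(3) show ?thesis
    by (auto simp: is_ncnbc_def is_nbc_def broken_circuits_def)
qed

lemma sum_ncnbc_by_bond_closure:
  assumes H: "H \<in> NC n E"
  shows "(\<Sum>S | is_ncnbc r H S. g S) = (\<Sum>K | K \<in> NC n E \<and> K \<subseteq> H. \<Sum>S\<in>spanning_ncnbc K. g S)"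
proof -
  have "{S. is_ncnbc r H S \<and> bond_closure S = K} = spanning_ncnbc K"
    if "K \<in> NC n E" "K \<subseteq> H" for K
    using that spanning_ncnbc_bond_closure(3)[OF H] bond_closure_spanning_ncnbc
      ncnbc_if_spanning_ncnbc[OF H] by blast
  moreover have "bond_closure ` {S. is_ncnbc r H S} \<subseteq> {K. K \<in> NC n E \<and> K \<subseteq> H}"
    using spanning_ncnbc_bond_closure(1,2)[OF H] by blast
  moreover have "finite {K. K \<in> NC n E \<and> K \<subseteq> H}"
    using finite_NC by simp
  ultimately show ?thesis
    using sum.group[of "{S. is_ncnbc r H S}" _ bond_closure g, symmetric]
      finite_ncnbc[OF NC_subset_E[OF H]] by (auto intro!: sum.cong)
qed

lemma mobius_NC:
  assumes "H \<in> NC n E"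
  shows "mobius (NC n E) H = (- 1) ^ bond_rank H * int (ncnbc r H (bond_rank H))"
proof (rule mobius_eqI[OF _ _ _ assms])
  show "finite H" if "H \<in> NC n E" for H
    using that NC_subset_E finite_subset finite_E by blast
  show "(- 1) ^ bond_rank {} * int (ncnbc r {} (bond_rank {})) = 1"
    by (simp add: bond_rank_empty ncnbc_empty)
  have sum: "(- 1) ^ bond_rank K * int (ncnbc r K (bond_rank K)) = (\<Sum>S\<in>spanning_ncnbc K. (- 1) ^ card S)"
    for K
    by (simp add: spanning_ncnbc_def ncnbc_def)
  fix H assume H: "H \<in> NC n E" "H \<noteq> {}"
  have "(\<Sum>K\<in>{K \<in> NC n E. K \<subseteq> H}. (- 1) ^ bond_rank K * int (ncnbc r K (bond_rank K)))
      = (\<Sum>S | is_ncnbc r H S. (- 1) ^ card S)"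
    unfolding sum by (rule sum_ncnbc_by_bond_closure[OF H(1), symmetric])
  also have "\<dots> = 0"
    using sum_ncnbc_eq_0[OF H] .
  finally show "(\<Sum>K\<in>{K \<in> NC n E. K \<subseteq> H}. (- 1) ^ bond_rank K * int (ncnbc r K (bond_rank K))) = 0" .
qed

lemma rho_eq_bond_rank:
  assumes graded: "graded_rank (NC n E) rho rk" and H: "H \<in> NC n E"
  shows "rho H = bond_rank H"
proof -
  have fin: "finite H" if "H \<in> NC n E" for H
    using that NC_subset_E finite_subset finite_E by blast
  have mono: "bond_rank K < bond_rank H" if "K \<in> NC n E" "H \<in> NC n E" "K \<subset> H" for K H
    using that bond_rank_strict_mono by (simp add: NC_iff)
  have step: "\<exists>K\<in>NC n E. K \<subset> H \<and> bond_rank H = bond_rank K + 1"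
    if H': "H \<in> NC n E" "H \<noteq> {}" for H
  proof -
    obtain K where K: "K \<in> NC n E" "K \<subset> H" "cc n K = cc n H + 1"
      using NC_lower_cover_exists[OF H'] by blast
    moreover have "cc n K \<le> n"
      by (rule cc_le)
    ultimately have "bond_rank H = bond_rank K + 1"
      by (simp add: bond_rank_def)
    with K show ?thesis
      by blast
  qed
  show ?thesis
    by (rule graded_rank_eqI[where g = bond_rank, OF graded fin bond_rank_empty mono step H])
qed

lemma rk_eq_bond_rank_E:
  assumes "graded_rank (NC n E) rho rk"
  shows "rk = bond_rank E"
proof -
  have "\<not> (\<exists>H\<in>NC n E. E \<subset> H)"
    using NC_subset_E by blast
  then have "rho E = rk"
    using assms E_in_NC[OF crossing_closed] by (simp add: graded_rank_def)
  then show ?thesis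
    using rho_eq_bond_rank[OF assms E_in_NC[OF crossing_closed]] by simp
qed

lemma card_ncnbc_le_bond_rank_E:
  assumes "is_ncnbc r E S"
  shows "card S \<le> bond_rank E"
proof -
  have "card S = bond_rank (bond_closure S)" "bond_closure S \<subseteq> E"
    using spanning_ncnbc_bond_closure[OF E_in_NC[OF crossing_closed] assms] by (simp_all add: spanning_ncnbc_def)
  moreover have "cc n E \<le> cc n (bond_closure S)"
    using cc_antimono linked_mono calculation(2) by blast
  ultimately show ?thesis
    by (simp add: bond_rank_def)
qed

lemma char_poly_NC:
  assumes graded: "graded_rank (NC n E) rho rk"
  shows "char_poly (NC n E) rho rk t
    = (\<Sum>k\<in>{0..card E}. (- 1) ^ k * real (ncnbc r E k) * t powi (int rk - int k))"
proof -
  let ?term = "\<lambda>S. (- 1) ^ card S * t ^ (rk - card S)"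
  have "of_int (mobius (NC n E) H) * t ^ (rk - rho H) = (\<Sum>S\<in>spanning_ncnbc H. ?term S)"
    if "H \<in> NC n E" for H
    using mobius_NC[OF that] rho_eq_bond_rank[OF graded that]
    by (simp add: spanning_ncnbc_def ncnbc_def sum_distrib_right)
  then have "char_poly (NC n E) rho rk t = (\<Sum>H\<in>NC n E. \<Sum>S\<in>spanning_ncnbc H. ?term S)"
    unfolding char_poly_def by (rule sum.cong[OF refl])
  also have "\<dots> = (\<Sum>S | is_ncnbc r E S. ?term S)"
    using sum_ncnbc_by_bond_closure[OF E_in_NC[OF crossing_closed], of ?term] NC_subset_E
    by (simp add: Collect_conj_eq Int_absorb2 subset_iff)
  also have "\<dots> = (\<Sum>S | is_ncnbc r E S. (- 1) ^ card S * t powi (int rk - int (card S)))"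
  proof (intro sum.cong refl)
    fix S assume "S \<in> {S. is_ncnbc r E S}"
    then have "int rk - int (card S) = int (rk - card S)"
      using card_ncnbc_le_bond_rank_E rk_eq_bond_rank_E[OF graded] by simp
    then have "t powi (int rk - int (card S)) = t ^ (rk - card S)"
      by (simp only: power_int_of_nat)
    then show "?term S = (- 1) ^ card S * t powi (int rk - int (card S))"
      by simp
  qed
  also have "\<dots> = (\<Sum>k\<in>{0..card E}. real (ncnbc r E k) * ((- 1) ^ k * t powi (int rk - int k)))"
    using sum_group_by_card[OF finite_ncnbc[OF order_refl], of "card E"]
      card_mono[OF finite_E] by (simp add: ncnbc_def is_ncnbc_def is_nbc_def)
  finally show ?thesis
    by (simp add: ac_simps)
qed

end

theorem theorem3p5:
  fixes n :: nat and E :: "edge set" and r :: "(edge \<times> edge) set"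
  assumes "graph_on n E"
    and "linear_order_on E r"
    and "upper_crossing_closed n E r"
  shows "(\<forall>H\<in>NC n E. mobius (NC n E) H = (-1) ^ (n - cc n H) * int (ncnbc r H (n - cc n H)))
       \<and> (\<forall>rho rk. graded_rank (NC n E) rho rk \<longrightarrow>
            (\<forall>t::real. char_poly (NC n E) rho rk t =
               (\<Sum>k\<in>{0..card E}. (-1) ^ k * real (ncnbc r E k) * t powi (int rk - int k))))"
proof -
  interpret ucc_graph n E r
    using assms by (simp add: ucc_graph_def ucc_graph_axioms_def numbered_graph_def)
  show ?thesis
    using mobius_NC char_poly_NC by (simp add: bond_rank_def)
qed

end
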